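(* Let $n\ge1$, $\mathbf{x},\mathbf{x}'\in\mathbb{R}^n$, let $P$ be the cyclic shift matrix ($P\mathbf{v}=[v_n,v_1,\ldots,v_{n-1}]^T$), let $h:\mathbb{R}\to\mathbb{R}$, and let $\kappa$ be the radial basis function kernel $\kappa(\mathbf{u},\mathbf{v})=h(\|\mathbf{u}-\mathbf{v}\|^2)$. Define $\mathbf{k}^{\mathbf{xx}'}\in\mathbb{R}^n$ by $k^{\mathbf{xx}'}_i=\kappa(\mathbf{x}',P^{i-1}\mathbf{x})$. Then $$\mathbf{k}^{\mathbf{xx}'}=h\!\left(\|\mathbf{x}\|^2+\|\mathbf{x}'\|^2-2\,\mathcal{F}^{-1}\left(\hat{\mathbf{x}}^{*}\odot\hat{\mathbf{x}}'\right)\right),$$ with $h$ applied element-wise and the scalars added to every entry. In particular, for the Gaussian kernel $\kappa(\mathbf{u},\mathbf{v})=\exp\left(-\frac{1}{\sigma^2}\|\mathbf{u}-\mathbf{v}\|^2\right)$ ($\sigma>0$), $\mathbf{k}^{\mathbf{xx}'}=\exp\left(-\frac{1}{\sigma^2}\left(\|\mathbf{x}\|^2+\|\mathbf{x}'\|^2-2\mathcal{F}^{-1}(\hat{\mathbf{x}}^{*}\odot\hat{\mathbf{x}}')\right)\right)$.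
   Context: For $\mathbf{v}\in\mathbb{C}^n$, $\hat{\mathbf{v}}=\mathcal{F}(\mathbf{v})$ is the discrete Fourier transform, $\hat{v}_k=\sum_{j=1}^n v_j e^{-2\pi \mathrm{i}(j-1)(k-1)/n}$, and $\mathcal{F}^{-1}$ is its inverse. $^{*}$ denotes element-wise complex conjugation and $\odot$ element-wise product; $\|\cdot\|$ is the Euclidean norm. *)

theory Defs
  imports Complex_Main
begin

(* Vectors in R^n / C^n are functions nat => real / complex, entries indexed 0..n-1
   (paper index j corresponds to j-1 here). *)

definition vnorm :: "nat \<Rightarrow> (nat \<Rightarrow> real) \<Rightarrow> real" where
  "vnorm n v = sqrt (\<Sum>j<n. (v j)^2)"

definition dft :: "nat \<Rightarrow> (nat \<Rightarrow> complex) \<Rightarrow> (nat \<Rightarrow> complex)" where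
  "dft n v = (\<lambda>k. \<Sum>j<n. v j * cis (- 2 * pi * real j * real k / real n))"

definition idft :: "nat \<Rightarrow> (nat \<Rightarrow> complex) \<Rightarrow> (nat \<Rightarrow> complex)" where
  "idft n w = (\<lambda>j. (1 / of_nat n) * (\<Sum>k<n. w k * cis (2 * pi * real j * real k / real n)))"

(* cyclic shift P v = [v_n, v_1, ..., v_{n-1}] (0-based: (P v)_i = v_{(i-1) mod n}) *)
definition cshift :: "nat \<Rightarrow> (nat \<Rightarrow> real) \<Rightarrow> (nat \<Rightarrow> real)" where
  "cshift n v = (\<lambda>i. v ((i + n - 1) mod n))"

definition vdiff :: "(nat \<Rightarrow> real) \<Rightarrow> (nat \<Rightarrow> real) \<Rightarrow> (nat \<Rightarrow> real)" where
  "vdiff u v = (\<lambda>i. u i - v i)"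

definition rbf_kernel :: "(real \<Rightarrow> real) \<Rightarrow> nat \<Rightarrow> (nat \<Rightarrow> real) \<Rightarrow> (nat \<Rightarrow> real) \<Rightarrow> real" where
  "rbf_kernel h n u v = h ((vnorm n (vdiff u v))^2)"

definition gauss_kernel :: "real \<Rightarrow> nat \<Rightarrow> (nat \<Rightarrow> real) \<Rightarrow> (nat \<Rightarrow> real) \<Rightarrow> real" where
  "gauss_kernel \<sigma> n u v = exp (- (1 / \<sigma>^2) * (vnorm n (vdiff u v))^2)"

(* the vector k^{xx'} for kernel kappa: entry i (0-based) is kappa(x', P^i x) *)
definition kvec :: "(nat \<Rightarrow> (nat \<Rightarrow> real) \<Rightarrow> (nat \<Rightarrow> real) \<Rightarrow> real) \<Rightarrow> nat
    \<Rightarrow> (nat \<Rightarrow> real) \<Rightarrow> (nat \<Rightarrow> real) \<Rightarrow> (nat \<Rightarrow> real)" where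
  "kvec \<kappa> n x x' = (\<lambda>i. \<kappa> n x' ((cshift n ^^ i) x))"

definition xcorr :: "nat \<Rightarrow> (nat \<Rightarrow> real) \<Rightarrow> (nat \<Rightarrow> real) \<Rightarrow> (nat \<Rightarrow> complex)" where
  "xcorr n x x' = idft n (\<lambda>k. cnj (dft n (\<lambda>j. complex_of_real (x j)) k)
                              * dft n (\<lambda>j. complex_of_real (x' j)) k)"

end

theory Submission
  imports Defs
begin

text \<open>The power \<open>P\<^sup>i\<close> moves entry \<open>j\<close> of a vector to position \<open>j + i mod n\<close>, so it preserves
  the norm, and expanding the square gives \<open>\<parallel>x' - P\<^sup>i x\<parallel>\<^sup>2 = \<parallel>x\<parallel>\<^sup>2 + \<parallel>x'\<parallel>\<^sup>2 - 2 c\<^sub>i\<close> with the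
  circular cross-correlation \<open>c\<^sub>i = \<Sum>\<^sub>j x\<^sub>j x'\<^sub>j\<^sub>+\<^sub>i\<close>. Expanding the inverse transform of
  \<open>x\<^sup>* \<odot> x'\<close> and summing over the frequency first, orthogonality of the \<open>n\<close>-th roots of unity
  leaves exactly the terms of \<open>c\<^sub>i\<close>; in particular that entry is real.\<close>

lemma sum_cis_roots_of_unity:
  assumes "0 < n"
  shows "(\<Sum>k<n. cis (2 * pi * real k * of_int d / real n))
           = (if int n dvd d then of_nat n else 0)"
proof -
  define z where "z = cis (2 * pi * of_int d / real n)"
  have powers: "cis (2 * pi * real k * of_int d / real n) = z ^ k" for k
    unfolding z_def DeMoivre by (simp add: field_simps)
  have "z ^ n = cis (2 * pi * of_int d)"
    unfolding z_def DeMoivre using assms by (simp add: field_simps)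
  then have z_pow_n: "z ^ n = 1" by simp
  show ?thesis
  proof (cases "int n dvd d")
    case True
    then obtain m where "d = int n * m" by auto
    then have "2 * pi * real k * of_int d / real n = 2 * pi * of_int (int k * m)" for k
      using assms by (simp add: field_simps)
    then show ?thesis using True by simp
  next
    case False
    have "z \<noteq> 1"
    proof
      assume "z = 1"
      then obtain m :: int where "2 * pi * of_int d / real n = of_int m * 2 * pi"
        by (auto simp: z_def complex_eq_iff cos_one_2pi_int)
      then have "real_of_int d = real_of_int (m * int n)"
        using assms by (simp add: field_simps)
      then show False using False by (simp only: of_int_eq_iff) simp
    qed
    then show ?thesis using False by (simp add: powers sum_gp_strict z_pow_n)
  qed
qed

lemma idft_cnj_dft_mult_dft:
  assumes "0 < n"
  shows "idft n (\<lambda>k. cnj (dft n u k) * dft n v k) i = (\<Sum>j<n. cnj (u j) * v ((j + i) mod n))"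
proof -
  let ?e = "\<lambda>k j l. cis (2 * pi * real k * of_int (int j - int l + int i) / real n)"
  have phase: "cis (2 * pi * real j * real k / real n) * cis (- 2 * pi * real l * real k / real n)
                 * cis (2 * pi * real i * real k / real n) = ?e k j l" for k j l
    using assms by (simp add: cis_mult field_simps)
  have "cnj (dft n u k) * dft n v k * cis (2 * pi * real i * real k / real n)
          = (\<Sum>j<n. \<Sum>l<n. cnj (u j) * v l * ?e k j l)" for k
  proof -
    have cnj_dft: "cnj (dft n u k) = (\<Sum>j<n. cnj (u j) * cis (2 * pi * real j * real k / real n))"
      by (simp add: dft_def cis_cnj)
    have dft: "dft n v k = (\<Sum>l<n. v l * cis (- 2 * pi * real l * real k / real n))"
      by (simp add: dft_def)
    show ?thesis
      unfolding cnj_dft dft sum_product unfolding sum_distrib_right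
      by (intro sum.cong refl) (simp only: flip: phase, simp add: mult_ac)
  qed
  then have "idft n (\<lambda>k. cnj (dft n u k) * dft n v k) i
               = (\<Sum>k<n. \<Sum>j<n. \<Sum>l<n. cnj (u j) * v l * ?e k j l) / of_nat n"
    by (simp add: idft_def)
  also have "\<dots> = (\<Sum>j<n. \<Sum>l<n. cnj (u j) * v l * (\<Sum>k<n. ?e k j l)) / of_nat n"
  proof -
    have swap: "(\<Sum>k<n. \<Sum>j<n. \<Sum>l<n. F k j l) = (\<Sum>j<n. \<Sum>l<n. \<Sum>k<n. F k j l)"
      for F :: "nat \<Rightarrow> nat \<Rightarrow> nat \<Rightarrow> complex"
      by (subst sum.swap) (intro sum.cong refl sum.swap)
    show ?thesis by (subst swap) (simp only: sum_distrib_left)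
  qed
  also have "\<dots> = (\<Sum>j<n. \<Sum>l<n. if l = (j + i) mod n then cnj (u j) * v l * of_nat n else 0)
                    / of_nat n"
  proof (intro arg_cong[where f = "\<lambda>s. s / _"] sum.cong refl)
    fix j l assume "l \<in> {..<n}"
    have "int n dvd (int j - int l + int i) \<longleftrightarrow> (int j + int i) mod int n = int l mod int n"
      by (simp add: mod_eq_dvd_iff algebra_simps)
    also have "\<dots> \<longleftrightarrow> int ((j + i) mod n) = int l"
      using \<open>l \<in> {..<n}\<close> by (simp add: zmod_int)
    finally show "cnj (u j) * v l * (\<Sum>k<n. ?e k j l)
                 = (if l = (j + i) mod n then cnj (u j) * v l * of_nat n else 0)"
      unfolding sum_cis_roots_of_unity[OF assms] by auto
  qed
  also have "\<dots> = (\<Sum>j<n. cnj (u j) * v ((j + i) mod n))"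
    using assms by (simp add: sum.delta sum_divide_distrib)
  finally show ?thesis .
qed

corollary xcorr_eq_circular_correlation:
  assumes "0 < n"
  shows "xcorr n x x' i = complex_of_real (\<Sum>j<n. x j * x' ((j + i) mod n))"
  using idft_cnj_dft_mult_dft[OF assms] by (simp add: xcorr_def)

lemma vnorm_sq: "(vnorm n v)^2 = (\<Sum>j<n. (v j)^2)"
  unfolding vnorm_def by (simp add: sum_nonneg)

lemma vnorm_vdiff_sq:
  "(vnorm n (vdiff u v))^2 = (vnorm n u)^2 + (vnorm n v)^2 - 2 * (\<Sum>j<n. u j * v j)"
  by (simp add: vnorm_sq vdiff_def power2_diff sum.distrib sum_subtractf sum_distrib_left
                mult.assoc)

lemma funpow_cshift_mod_add:
  assumes "0 < n" "j < n"
  shows "(cshift n ^^ i) x ((j + i) mod n) = x j"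
proof (induction i)
  case 0
  then show ?case using assms by simp
next
  case (Suc i)
  have "((j + Suc i) mod n + n - 1) mod n = ((j + Suc i) mod n + (n - 1)) mod n"
    using assms(1) by simp
  also have "\<dots> = (j + Suc i + (n - 1)) mod n"
    by (rule mod_add_left_eq)
  also have "j + Suc i + (n - 1) = j + i + n"
    using assms(1) by simp
  finally show ?case using Suc by (simp add: cshift_def)
qed

lemma inj_on_mod_add:
  "inj_on (\<lambda>j. (j + i) mod n) {..<n :: nat}"
proof (rule inj_onI)
  fix a b assume "a \<in> {..<n}" "b \<in> {..<n}" "(a + i) mod n = (b + i) mod n"
  then have "(int a + int i) mod int n = (int b + int i) mod int n"
    by (metis of_nat_add zmod_int)
  then have "int a mod int n = int b mod int n"
    by (simp add: mod_eq_dvd_iff)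
  then show "a = b" using \<open>a \<in> {..<n}\<close> \<open>b \<in> {..<n}\<close> by (simp flip: zmod_int)
qed

lemma sum_mod_add_reindex:
  assumes "0 < (n :: nat)"
  shows "(\<Sum>j<n. f ((j + i) mod n)) = (\<Sum>j<n. f j :: 'a :: comm_monoid_add)"
proof -
  have "(\<lambda>j. (j + i) mod n) ` {..<n} = {..<n}"
    using assms by (intro endo_inj_surj inj_on_mod_add) auto
  then show ?thesis
    using sum.reindex_bij_betw[of "\<lambda>j. (j + i) mod n" "{..<n}" "{..<n}" f]
    by (simp add: bij_betw_def inj_on_mod_add)
qed

lemma sum_funpow_cshift:
  assumes "0 < n"
  shows "(\<Sum>m<n. g m ((cshift n ^^ i) x m)) = (\<Sum>j<n. g ((j + i) mod n) (x j) :: 'a :: comm_monoid_add)"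
  using sum_mod_add_reindex[OF assms, of "\<lambda>m. g m ((cshift n ^^ i) x m)" i]
  by (simp add: funpow_cshift_mod_add[OF assms])

lemma vnorm_funpow_cshift:
  assumes "0 < n"
  shows "vnorm n ((cshift n ^^ i) x) = vnorm n x"
  using sum_funpow_cshift[OF assms, of "\<lambda>_ t. t^2"] by (simp add: vnorm_def)

lemma vnorm_vdiff_funpow_cshift_sq:
  assumes "0 < n"
  shows "(vnorm n (vdiff x' ((cshift n ^^ i) x)))^2
           = (vnorm n x)^2 + (vnorm n x')^2 - 2 * Re (xcorr n x x' i)"
  using sum_funpow_cshift[OF assms, of "\<lambda>m t. x' m * t"]
  by (simp add: vnorm_vdiff_sq vnorm_funpow_cshift[OF assms] xcorr_eq_circular_correlation[OF assms]
                mult.commute)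

theorem mainTheorem4:
  fixes n :: nat and x x' :: "nat \<Rightarrow> real" and h :: "real \<Rightarrow> real" and \<sigma> :: real
  assumes "n \<ge> 1"
  shows "(\<forall>i<n. Im (xcorr n x x' i) = 0 \<and>
           kvec (rbf_kernel h) n x x' i
             = h ((vnorm n x)^2 + (vnorm n x')^2 - 2 * Re (xcorr n x x' i)))
       \<and> (\<sigma> > 0 \<longrightarrow> (\<forall>i<n. kvec (gauss_kernel \<sigma>) n x x' i
             = exp (- (1 / \<sigma>^2) * ((vnorm n x)^2 + (vnorm n x')^2 - 2 * Re (xcorr n x x' i)))))"
proof -
  from assms have n: "0 < n" by simp
  show ?thesis
    using xcorr_eq_circular_correlation[OF n] vnorm_vdiff_funpow_cshift_sq[OF n]
    by (simp add: kvec_def rbf_kernel_def gauss_kernel_def)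
qed

end
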